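(* Let $v,w\in\mathbb C\cong\mathbb R^2$ be linearly independent (with no restriction on their lengths). Let the tracer point of a Prytz planimeter of length $\ell$ traverse the closed polygonal "figure eight" with successive vertices $0,v,v+w,w,-w,-v-w,-v,0$ (base point $0$). Then the resulting holonomy $\tilde H:S^1\to S^1$ is represented by a matrix in $SU(1,1)$ of trace $2+16\operatorname{Im}^2(\bar bd)\,|ad+bc|^2>2$, where $a=\cosh\frac{|v|}{2\ell}$, $b=-\sinh\frac{|v|}{2\ell}\frac{v}{|v|}$, $c=\cosh\frac{|w|}{2\ell}$, $d=-\sinh\frac{|w|}{2\ell}\frac{w}{|w|}$. In particular $\tilde H$ has exactly two fixed points on $S^1$ (one attracting, one repelling), even though the oriented area enclosed by this loop is $0$ and the loop may be arbitrarily short. *)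

theory Defs
  imports "HOL-Analysis.Analysis"
begin

definition SU11 :: "(complex^2^2) set" where
  "SU11 = {M. M$2$2 = cnj (M$1$1) \<and> M$2$1 = cnj (M$1$2) \<and> det M = 1}"

definition moebius :: "complex^2^2 \<Rightarrow> complex \<Rightarrow> complex" where
  "moebius M z = (M$1$1 * z + M$1$2) / (M$2$1 * z + M$2$2)"

text \<open>Motion of a Prytz planimeter of length l whose tracer point follows the path gamma
  (parametrised by [0,1]): u t is the unit vector pointing from the tracer point gamma t to the
  blade (chisel edge) gamma t + l * u t; the no-slip condition says that the velocity of the blade
  is parallel to the rod, i.e. to u t. The path is only piecewise differentiable, so the
  condition is imposed outside a finite set; u is required to be continuous on [0,1].\<close>
definition prytz_motion :: "real \<Rightarrow> (real \<Rightarrow> complex) \<Rightarrow> (real \<Rightarrow> complex) \<Rightarrow> bool" where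
  "prytz_motion l \<gamma> u \<longleftrightarrow>
     continuous_on {0..1} u \<and> (\<forall>t\<in>{0..1}. norm (u t) = 1) \<and>
     (\<exists>S. finite S \<and> (\<forall>t\<in>{0<..<1} - S. \<exists>g' u'.
         (\<gamma> has_vector_derivative g') (at t) \<and> (u has_vector_derivative u') (at t) \<and>
         Im (cnj (u t) * (g' + complex_of_real l * u')) = 0))"

text \<open>The holonomy of the planimeter along gamma (the map S^1 -> S^1 sending the initial
  direction u 0 of the rod to the final direction u 1) is represented by the matrix M:
  every initial direction admits a motion, and every motion ends at moebius M applied to its
  initial direction.\<close>
definition holonomy_represented_by :: "real \<Rightarrow> (real \<Rightarrow> complex) \<Rightarrow> complex^2^2 \<Rightarrow> bool" where
  "holonomy_represented_by l \<gamma> M \<longleftrightarrow>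
     (\<forall>z. norm z = 1 \<longrightarrow> (\<exists>u. prytz_motion l \<gamma> u \<and> u 0 = z)) \<and>
     (\<forall>u. prytz_motion l \<gamma> u \<longrightarrow> u 1 = moebius M (u 0))"

definition figure_eight :: "complex \<Rightarrow> complex \<Rightarrow> real \<Rightarrow> complex" where
  "figure_eight v w = linepath 0 v +++ linepath v (v + w) +++ linepath (v + w) w +++
     linepath w (- w) +++ linepath (- w) (- v - w) +++ linepath (- v - w) (- v) +++
     linepath (- v) 0"

end

(* The direction of the rod is a unit complex number u. Along a segment with displacement D the
   no-slip condition, together with the tangency Re (cnj u u') = 0 forced by |u| = 1, is the
   Riccati equation u' = (cnj D u^2 - D) / (2 l). Its solutions are the orbits of the Moebius action
   of the one-parameter subgroup prytz_flow (sgn D) of SU(1,1), run for time s = t |D| / (2 l);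
   every solution is such an orbit because pulling it back along the inverse flow gives a curve
   with zero derivative. So a segment has holonomy segment_holonomy l D, holonomies multiply under
   concatenation, and the figure eight has holonomy A B A^-1 B^-2 A^-1 B A, where A and B belong to
   the segments v and w. A polynomial identity evaluates its trace to
   2 + 16 Im^2 (cnj b d) |a d + b c|^2, which exceeds 2 because v and w are independent. An element
   of SU(1,1) whose diagonal entry has real part x > 1 fixes exactly the two points of the circle
   at which its denominator equals x + r resp. x - r = 1 / (x + r), where r = sqrt (x^2 - 1); the
   derivatives there are (x + r)^-2 < 1 and (x + r)^2 > 1. *)

theory Submission
  imports Defs
begin

section \<open>Moebius transformations and SU(1,1)\<close>

definition mat2 :: "complex \<Rightarrow> complex \<Rightarrow> complex \<Rightarrow> complex \<Rightarrow> complex^2^2" where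
  "mat2 p q r s = (\<chi> i j. if i = 1 then (if j = 1 then p else q) else (if j = 1 then r else s))"

lemma mat2_nth [simp]:
  "mat2 p q r s $ 1 $ 1 = p" "mat2 p q r s $ 1 $ 2 = q"
  "mat2 p q r s $ 2 $ 1 = r" "mat2 p q r s $ 2 $ 2 = s"
  by (simp_all add: mat2_def)

lemma mat2_eta: "mat2 (M$1$1) (M$1$2) (M$2$1) (M$2$2) = M"
  unfolding mat2_def by (simp add: vec_eq_iff) (metis exhaust_2)

lemma mat2_mult:
  "mat2 p q r s ** mat2 e f g h =
     mat2 (p*e + q*g) (p*f + q*h) (r*e + s*g) (r*f + s*h)"
  by (simp add: mat2_def matrix_matrix_mult_def vec_eq_iff UNIV_2)

lemma det_mat2: "det (mat2 p q r s) = p * s - q * r"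
  by (simp add: det_2)

lemma trace_mat2: "trace (mat2 p q r s) = p + s"
  by (simp add: trace_def UNIV_2)

lemma moebius_mat2: "moebius (mat2 p q r s) z = (p * z + q) / (r * z + s)"
  by (simp add: moebius_def)

lemma moebius_mult:
  assumes "B$2$1 * z + B$2$2 \<noteq> 0"
  shows "moebius (A ** B) z = moebius A (moebius B z)"
proof -
  define p where "p = B$1$1 * z + B$1$2"
  define q where "q = B$2$1 * z + B$2$2"
  have "moebius A (moebius B z) = ((A$1$1 * (p/q) + A$1$2) * q) / ((A$2$1 * (p/q) + A$2$2) * q)"
    using assms by (simp add: moebius_def p_def[symmetric] q_def[symmetric])
  also have "\<dots> = (A$1$1 * p + A$1$2 * q) / (A$2$1 * p + A$2$2 * q)"
    using assms by (simp add: q_def distrib_right)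
  also have "\<dots> = moebius (A ** B) z"
    by (simp add: moebius_def matrix_matrix_mult_def UNIV_2 p_def q_def algebra_simps)
  finally show ?thesis ..
qed

lemma moebius_has_field_derivative:
  assumes "M$2$1 * z + M$2$2 \<noteq> 0"
  shows "(moebius M has_field_derivative det M / (M$2$1 * z + M$2$2)\<^sup>2) (at z)"
proof -
  have "(moebius M has_field_derivative
      (M$1$1 * (M$2$1 * z + M$2$2) - (M$1$1 * z + M$1$2) * M$2$1) / (M$2$1 * z + M$2$2)\<^sup>2) (at z)"
    unfolding moebius_def[abs_def] using assms
    by (auto intro!: derivative_eq_intros simp: power2_eq_square)
  moreover have "M$1$1 * (M$2$1 * z + M$2$2) - (M$1$1 * z + M$1$2) * M$2$1 = det M"
    by (simp add: det_2 algebra_simps)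
  ultimately show ?thesis
    by simp
qed

lemma SU11_mat2_iff: "mat2 p q r s \<in> SU11 \<longleftrightarrow> s = cnj p \<and> r = cnj q \<and> p * s - q * r = 1"
  by (simp add: SU11_def det_mat2)

lemma SU11_cases:
  assumes "M \<in> SU11"
  obtains \<alpha> \<beta> where "M = mat2 \<alpha> \<beta> (cnj \<beta>) (cnj \<alpha>)" "\<alpha> * cnj \<alpha> - \<beta> * cnj \<beta> = 1"
proof (rule that)
  have M: "M$2$2 = cnj (M$1$1)" "M$2$1 = cnj (M$1$2)" "det M = 1"
    using assms by (auto simp: SU11_def)
  show "M = mat2 (M$1$1) (M$1$2) (cnj (M$1$2)) (cnj (M$1$1))"
    using mat2_eta[of M] M by simp
  show "M$1$1 * cnj (M$1$1) - M$1$2 * cnj (M$1$2) = 1"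
    using M by (simp add: det_2)
qed

lemma SU11_mult:
  assumes "A \<in> SU11" "B \<in> SU11"
  shows "A ** B \<in> SU11"
proof -
  obtain \<alpha> \<beta> where A: "A = mat2 \<alpha> \<beta> (cnj \<beta>) (cnj \<alpha>)"
    using assms(1) by (rule SU11_cases)
  obtain \<gamma> \<delta> where B: "B = mat2 \<gamma> \<delta> (cnj \<delta>) (cnj \<gamma>)"
    using assms(2) by (rule SU11_cases)
  have "det (A ** B) = 1"
    using assms by (simp add: det_mul SU11_def)
  then show ?thesis
    unfolding A B mat2_mult SU11_mat2_iff by (simp add: det_mat2)
qed

lemma norm_SU11_moebius_denominator:
  assumes "M \<in> SU11" "norm z = 1"
  shows "norm (M$2$1 * z + M$2$2) = norm (M$1$1 * z + M$1$2)"
proof -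
  obtain \<alpha> \<beta> where M: "M = mat2 \<alpha> \<beta> (cnj \<beta>) (cnj \<alpha>)"
    using assms(1) by (rule SU11_cases)
  have "z * cnj z = 1"
    using assms(2) complex_norm_square[of z] by simp
  then have "\<alpha> * z + \<beta> = z * cnj (cnj \<beta> * z + cnj \<alpha>)"
    by (simp add: algebra_simps)
  then have "norm (\<alpha> * z + \<beta>) = norm (cnj \<beta> * z + cnj \<alpha>)"
    using assms(2) by (simp only: norm_mult complex_mod_cnj)
  then show ?thesis
    by (simp add: M)
qed

lemma SU11_moebius_denominator_nonzero:
  assumes "M \<in> SU11" "norm z = 1"
  shows "M$2$1 * z + M$2$2 \<noteq> 0"
proof
  obtain \<alpha> \<beta> where M: "M = mat2 \<alpha> \<beta> (cnj \<beta>) (cnj \<alpha>)" and det: "\<alpha> * cnj \<alpha> - \<beta> * cnj \<beta> = 1"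
    using assms(1) by (rule SU11_cases)
  assume "M$2$1 * z + M$2$2 = 0"
  then have "M$1$1 * z + M$1$2 = 0"
    using norm_SU11_moebius_denominator[OF assms] by simp
  then have "\<beta> = - \<alpha> * z"
    by (simp add: M eq_neg_iff_add_eq_0 add.commute)
  moreover have "z * cnj z = 1"
    using assms(2) complex_norm_square[of z] by simp
  ultimately have "\<alpha> * cnj \<alpha> - \<beta> * cnj \<beta> = 0"
    by (simp add: mult.commute)
  with det show False
    by simp
qed

lemma norm_SU11_moebius:
  assumes "M \<in> SU11" "norm z = 1"
  shows "norm (moebius M z) = 1"
proof -
  have "norm (M$2$1 * z + M$2$2) \<noteq> 0"
    using SU11_moebius_denominator_nonzero[OF assms] by simp
  then show ?thesis
    using norm_SU11_moebius_denominator[OF assms] by (simp add: moebius_def norm_divide)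
qed

section \<open>Fixed points of hyperbolic elements\<close>

lemma moebius_fixed_point_iff:
  assumes "r * z + s \<noteq> 0"
  shows "moebius (mat2 p q r s) z = z \<longleftrightarrow> r * z\<^sup>2 + (s - p) * z - q = 0"
proof -
  have "moebius (mat2 p q r s) z = z \<longleftrightarrow> p * z + q = z * (r * z + s)"
    using assms by (auto simp: moebius_mat2 field_simps)
  also have "\<dots> \<longleftrightarrow> r * z\<^sup>2 + (s - p) * z - q = 0"
    by (auto simp: power2_eq_square algebra_simps)
  finally show ?thesis .
qed

lemma SU11_fixed_point_quadratic_factor:
  assumes "\<alpha> * cnj \<alpha> - \<beta> * cnj \<beta> = 1" "r\<^sup>2 = (Re \<alpha>)\<^sup>2 - 1"
  shows "cnj \<beta> * (cnj \<beta> * z\<^sup>2 + (cnj \<alpha> - \<alpha>) * z - \<beta>) =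
    (cnj \<beta> * z - (\<i> * of_real (Im \<alpha>) + of_real r)) * (cnj \<beta> * z - (\<i> * of_real (Im \<alpha>) - of_real r))"
proof -
  have "\<alpha> = of_real (Re \<alpha>) + \<i> * of_real (Im \<alpha>)" "cnj \<alpha> = of_real (Re \<alpha>) - \<i> * of_real (Im \<alpha>)"
    by (simp_all add: complex_eq_iff)
  moreover have "(complex_of_real r)\<^sup>2 = (of_real (Re \<alpha>))\<^sup>2 - 1"
    using assms(2) by (metis of_real_1 of_real_diff of_real_power)
  moreover have "\<i> * \<i> = (-1 :: complex)"
    by simp
  ultimately show ?thesis
    using assms(1) by algebra
qed

lemma SU11_fixed_point_numerator_norm:
  assumes "\<alpha> * cnj \<alpha> - \<beta> * cnj \<beta> = 1" "r\<^sup>2 = (Re \<alpha>)\<^sup>2 - 1"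
  shows "norm (\<i> * of_real (Im \<alpha>) + of_real r) = norm \<beta>"
proof -
  have "complex_of_real ((norm \<alpha>)\<^sup>2) - of_real ((norm \<beta>)\<^sup>2) = 1"
    unfolding complex_norm_square by (rule assms(1))
  then have "(norm \<alpha>)\<^sup>2 - (norm \<beta>)\<^sup>2 = 1"
    by (metis of_real_diff of_real_eq_1_iff)
  then have "(norm (\<i> * of_real (Im \<alpha>) + of_real r))\<^sup>2 = (norm \<beta>)\<^sup>2"
    using assms(2) by (simp add: cmod_power2)
  then show ?thesis
    by (metis norm_ge_zero power2_eq_iff_nonneg)
qed

lemma hyperbolic_SU11_fixed_points_eq:
  fixes \<alpha> \<beta> :: complex
  assumes det: "\<alpha> * cnj \<alpha> - \<beta> * cnj \<beta> = 1" and hyp: "1 < Re \<alpha>"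
  defines "r \<equiv> sqrt ((Re \<alpha>)\<^sup>2 - 1)"
  defines "z1 \<equiv> (\<i> * of_real (Im \<alpha>) + of_real r) / cnj \<beta>"
    and "z2 \<equiv> (\<i> * of_real (Im \<alpha>) - of_real r) / cnj \<beta>"
  shows "{z. norm z = 1 \<and> moebius (mat2 \<alpha> \<beta> (cnj \<beta>) (cnj \<alpha>)) z = z} = {z1, z2}"
    and "cnj \<beta> * z1 + cnj \<alpha> = of_real (Re \<alpha> + r)" "cnj \<beta> * z2 + cnj \<alpha> = of_real (Re \<alpha> - r)"
proof -
  have r2: "r\<^sup>2 = (Re \<alpha>)\<^sup>2 - 1" "(- r)\<^sup>2 = (Re \<alpha>)\<^sup>2 - 1" and "0 < r"
    using hyp by (simp_all add: r_def abs_square_le_1 one_less_power)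
  have norm1: "norm (\<i> * of_real (Im \<alpha>) + of_real r) = norm \<beta>"
    and norm2: "norm (\<i> * of_real (Im \<alpha>) - of_real r) = norm \<beta>"
    using SU11_fixed_point_numerator_norm[OF det r2(1)] SU11_fixed_point_numerator_norm[OF det r2(2)]
    by simp_all
  have "\<i> * of_real (Im \<alpha>) + of_real r \<noteq> 0"
    using \<open>0 < r\<close> by (simp add: complex_eq_iff)
  with norm1 have "cnj \<beta> \<noteq> 0"
    by auto
  then have z1: "cnj \<beta> * z1 = \<i> * of_real (Im \<alpha>) + of_real r"
    and z2: "cnj \<beta> * z2 = \<i> * of_real (Im \<alpha>) - of_real r"
    by (simp_all add: z1_def z2_def)
  show "cnj \<beta> * z1 + cnj \<alpha> = of_real (Re \<alpha> + r)" "cnj \<beta> * z2 + cnj \<alpha> = of_real (Re \<alpha> - r)"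
    unfolding z1 z2 by (simp_all add: complex_eq_iff)
  have "norm z1 = 1" "norm z2 = 1"
    using norm1 norm2 \<open>cnj \<beta> \<noteq> 0\<close> by (simp_all add: z1_def z2_def norm_divide)
  have "mat2 \<alpha> \<beta> (cnj \<beta>) (cnj \<alpha>) \<in> SU11"
    using det by (simp add: SU11_mat2_iff)
  note den = SU11_moebius_denominator_nonzero[OF this, simplified]
  have "moebius (mat2 \<alpha> \<beta> (cnj \<beta>) (cnj \<alpha>)) z = z \<longleftrightarrow> z = z1 \<or> z = z2" if "norm z = 1" for z
  proof -
    have "moebius (mat2 \<alpha> \<beta> (cnj \<beta>) (cnj \<alpha>)) z = z \<longleftrightarrow>
        cnj \<beta> * (cnj \<beta> * z\<^sup>2 + (cnj \<alpha> - \<alpha>) * z - \<beta>) = 0"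
      using den[OF that] \<open>cnj \<beta> \<noteq> 0\<close> by (simp add: moebius_fixed_point_iff)
    also have "\<dots> \<longleftrightarrow> (cnj \<beta> * z - cnj \<beta> * z1) * (cnj \<beta> * z - cnj \<beta> * z2) = 0"
      unfolding SU11_fixed_point_quadratic_factor[OF det r2(1)] z1 z2 ..
    also have "\<dots> \<longleftrightarrow> z = z1 \<or> z = z2"
      using \<open>cnj \<beta> \<noteq> 0\<close> by simp
    finally show ?thesis .
  qed
  with \<open>norm z1 = 1\<close> \<open>norm z2 = 1\<close>
  show "{z. norm z = 1 \<and> moebius (mat2 \<alpha> \<beta> (cnj \<beta>) (cnj \<alpha>)) z = z} = {z1, z2}"
    by blast
qed

lemma hyperbolic_SU11_dynamics:
  assumes "M \<in> SU11" "2 < Re (trace M)"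
  shows "card {z. norm z = 1 \<and> moebius M z = z} = 2 \<and>
    (\<exists>z1 z2. norm z1 = 1 \<and> norm z2 = 1 \<and> moebius M z1 = z1 \<and> moebius M z2 = z2 \<and>
       norm (deriv (moebius M) z1) < 1 \<and> norm (deriv (moebius M) z2) > 1)"
proof -
  obtain \<alpha> \<beta> where M: "M = mat2 \<alpha> \<beta> (cnj \<beta>) (cnj \<alpha>)" and det: "\<alpha> * cnj \<alpha> - \<beta> * cnj \<beta> = 1"
    using assms(1) by (rule SU11_cases)
  have hyp: "1 < Re \<alpha>"
    using assms(2) by (simp add: M trace_mat2)
  define x where "x = Re \<alpha>"
  define r where "r = sqrt ((Re \<alpha>)\<^sup>2 - 1)"
  define z1 where "z1 = (\<i> * of_real (Im \<alpha>) + of_real r) / cnj \<beta>"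
  define z2 where "z2 = (\<i> * of_real (Im \<alpha>) - of_real r) / cnj \<beta>"
  note fixed = hyperbolic_SU11_fixed_points_eq[OF det hyp, folded r_def, folded z1_def z2_def x_def]
  have "0 < r" and r2: "r\<^sup>2 = x\<^sup>2 - 1"
    using hyp by (simp_all add: r_def x_def one_less_power)
  have "1 < x + r"
    using hyp \<open>0 < r\<close> by (simp add: x_def)
  have "(x + r) * (x - r) = 1"
    using r2 by (simp add: algebra_simps power2_eq_square)
  then have "x - r = 1 / (x + r)"
    using \<open>1 < x + r\<close> by (simp add: field_simps)
  have "z1 \<noteq> z2"
    using fixed(2,3) \<open>0 < r\<close> by auto
  have der: "deriv (moebius M) z = 1 / (of_real d)\<^sup>2"
    if "cnj \<beta> * z + cnj \<alpha> = of_real d" "d \<noteq> 0" for z d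
  proof (rule DERIV_imp_deriv)
    show "(moebius M has_field_derivative 1 / (of_real d)\<^sup>2) (at z)"
      using moebius_has_field_derivative[of M z] assms(1) that by (simp add: SU11_def M)
  qed
  have "norm (deriv (moebius M) z1) = 1 / (x + r)\<^sup>2" "norm (deriv (moebius M) z2) = (x + r)\<^sup>2"
    using der[OF fixed(2)] der[OF fixed(3)] \<open>1 < x + r\<close> \<open>x - r = 1 / (x + r)\<close>
    by (simp_all add: norm_divide norm_power power_one_over del: of_real_add of_real_diff)
  moreover have "1 / (x + r)\<^sup>2 < 1" "1 < (x + r)\<^sup>2"
    using \<open>1 < x + r\<close> by (simp_all add: one_less_power)
  moreover have "z1 \<in> {z. norm z = 1 \<and> moebius M z = z}" "z2 \<in> {z. norm z = 1 \<and> moebius M z = z}"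
    "card {z. norm z = 1 \<and> moebius M z = z} = 2"
    using \<open>z1 \<noteq> z2\<close> unfolding M fixed(1) by simp_all
  ultimately show ?thesis
    by (intro conjI exI[of _ z1] exI[of _ z2]) auto
qed

section \<open>The Riccati flow\<close>

definition prytz_flow :: "complex \<Rightarrow> real \<Rightarrow> complex^2^2" where
  "prytz_flow e s = mat2 (of_real (cosh s)) (- of_real (sinh s) * e) (- of_real (sinh s) * cnj e)
     (of_real (cosh s))"

lemma cnj_mult_self_of_norm_1: "norm e = 1 \<Longrightarrow> cnj e * e = 1"
  using complex_norm_square[of e] by (simp add: mult.commute)

lemma cosh_sq_minus_sinh_sq_complex:
  "complex_of_real (cosh s) * of_real (cosh s) - of_real (sinh s) * of_real (sinh s) = 1"
  using cosh_square_eq[of s] by (simp flip: of_real_mult of_real_diff add: power2_eq_square)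

lemma prytz_flow_SU11:
  assumes "norm e = 1"
  shows "prytz_flow e s \<in> SU11"
  using cosh_sq_minus_sinh_sq_complex[of s] cnj_mult_self_of_norm_1[OF assms]
  unfolding prytz_flow_def SU11_mat2_iff by (simp add: algebra_simps)

lemma prytz_flow_add:
  assumes "norm e = 1"
  shows "prytz_flow e s ** prytz_flow e t = prytz_flow e (s + t)"
proof -
  have e: "e * (cnj e * x) = x" for x
    using cnj_mult_self_of_norm_1[OF assms] by (metis mult.assoc mult.commute mult_1)
  show ?thesis
    unfolding prytz_flow_def mat2_mult cosh_add sinh_add by (simp add: algebra_simps e)
qed

lemma moebius_prytz_flow_0: "moebius (prytz_flow e 0) z = z"
  by (simp add: prytz_flow_def moebius_mat2)

lemma has_vector_derivative_divide:
  fixes f g :: "real \<Rightarrow> 'a::real_normed_field"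
  assumes "(f has_vector_derivative f') (at t)" "(g has_vector_derivative g') (at t)" "g t \<noteq> 0"
  shows "((\<lambda>s. f s / g s) has_vector_derivative (f' * g t - f t * g') / (g t)\<^sup>2) (at t)"
proof -
  have "((inverse \<circ> g) has_vector_derivative g' * - (inverse (g t) ^ 2)) (at t)"
    using field_vector_diff_chain_at[OF assms(2) DERIV_inverse[OF assms(3)]]
    by (simp add: power2_eq_square)
  from has_vector_derivative_mult[OF assms(1) this[unfolded o_def]]
  have "((\<lambda>s. f s / g s) has_vector_derivative
      f t * (g' * - (inverse (g t))\<^sup>2) + f' * inverse (g t)) (at t)"
    by (simp add: divide_inverse)
  then show ?thesis
    by (rule has_vector_derivative_eq_rhs)
      (use assms(3) in \<open>simp add: field_simps power2_eq_square\<close>)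
qed

lemma has_vector_derivative_moebius_prytz_flow:
  assumes "norm e = 1" "norm (u t) = 1" "(u has_vector_derivative u') (at t)"
  shows "((\<lambda>t. moebius (prytz_flow e (k * t)) (u t)) has_vector_derivative
      (u' + of_real k * (cnj e * (u t)\<^sup>2 - e)) /
        (- of_real (sinh (k * t)) * cnj e * u t + of_real (cosh (k * t)))\<^sup>2) (at t)"
proof -
  define C where "C = complex_of_real (cosh (k * t))"
  define S where "S = complex_of_real (sinh (k * t))"
  have den: "- S * cnj e * u t + C \<noteq> 0"
    using SU11_moebius_denominator_nonzero[OF prytz_flow_SU11[OF assms(1)] assms(2)]
    by (simp add: prytz_flow_def C_def S_def)
  have num: "((\<lambda>t. of_real (cosh (k * t)) * u t - of_real (sinh (k * t)) * e) has_vector_derivative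
      of_real k * S * u t + C * u' - of_real k * C * e) (at t)"
    unfolding C_def S_def
    by (rule derivative_eq_intros assms(3) refl | simp add: algebra_simps)+
  have denom: "((\<lambda>t. - of_real (sinh (k * t)) * cnj e * u t + of_real (cosh (k * t)))
      has_vector_derivative - of_real k * C * cnj e * u t - S * cnj e * u' + of_real k * S) (at t)"
    unfolding C_def S_def
    by (rule derivative_eq_intros assms(3) refl | simp add: algebra_simps)+
  have "(\<lambda>t. moebius (prytz_flow e (k * t)) (u t)) = (\<lambda>t.
      (of_real (cosh (k * t)) * u t - of_real (sinh (k * t)) * e) /
      (- of_real (sinh (k * t)) * cnj e * u t + of_real (cosh (k * t))))"
    by (simp add: fun_eq_iff prytz_flow_def moebius_mat2)
  then have deriv: "((\<lambda>t. moebius (prytz_flow e (k * t)) (u t)) has_vector_derivative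
      ((of_real k * S * u t + C * u' - of_real k * C * e) * (- S * cnj e * u t + C)
       - (C * u t - S * e) * (- of_real k * C * cnj e * u t - S * cnj e * u' + of_real k * S))
      / (- S * cnj e * u t + C)\<^sup>2) (at t)"
    using has_vector_derivative_divide[OF num denom] den by (simp add: C_def S_def)
  have numerator: "(of_real k * S * u t + C * u' - of_real k * C * e) * (- S * cnj e * u t + C)
       - (C * u t - S * e) * (- of_real k * C * cnj e * u t - S * cnj e * u' + of_real k * S)
     = (C * C - S * S) * (u' + of_real k * (cnj e * (u t)\<^sup>2 - e))"
    using cnj_mult_self_of_norm_1[OF assms(1)] by algebra
  have CS: "C * C - S * S = 1"
    by (simp add: C_def S_def cosh_sq_minus_sinh_sq_complex)
  from deriv have "((\<lambda>t. moebius (prytz_flow e (k * t)) (u t)) has_vector_derivative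
      (u' + of_real k * (cnj e * (u t)\<^sup>2 - e)) / (- S * cnj e * u t + C)\<^sup>2) (at t)"
    unfolding numerator CS mult_1_left .
  then show ?thesis
    by (simp only: C_def S_def)
qed

lemma continuous_on_moebius_prytz_flow:
  assumes "norm e = 1" "continuous_on S u" "\<forall>t\<in>S. norm (u t) = 1"
  shows "continuous_on S (\<lambda>t. moebius (prytz_flow e (k * t)) (u t))"
proof -
  have "prytz_flow e (k * t) $ 2 $ 1 * u t + prytz_flow e (k * t) $ 2 $ 2 \<noteq> 0" if "t \<in> S" for t
    using SU11_moebius_denominator_nonzero[OF prytz_flow_SU11[OF assms(1)]] assms(3) that by blast
  then show ?thesis
    unfolding moebius_def prytz_flow_def mat2_nth by (intro continuous_intros assms(2)) auto
qed

lemma prytz_flow_riccati: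
  assumes "norm e = 1" "norm z = 1"
  shows "cnj e * (moebius (prytz_flow e s) z)\<^sup>2 - e =
    (cnj e * z\<^sup>2 - e) / (- of_real (sinh s) * cnj e * z + of_real (cosh s))\<^sup>2"
proof -
  define C where "C = complex_of_real (cosh s)"
  define S where "S = complex_of_real (sinh s)"
  have den: "- S * cnj e * z + C \<noteq> 0"
    using SU11_moebius_denominator_nonzero[OF prytz_flow_SU11[OF assms(1)] assms(2)]
    by (simp add: prytz_flow_def C_def S_def)
  have m: "moebius (prytz_flow e s) z = (C * z - S * e) / (- S * cnj e * z + C)"
    by (simp add: prytz_flow_def moebius_mat2 C_def S_def)
  have "cnj e * (moebius (prytz_flow e s) z)\<^sup>2 - e =
      (cnj e * (C * z - S * e)\<^sup>2 - e * (- S * cnj e * z + C)\<^sup>2) / (- S * cnj e * z + C)\<^sup>2"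
    unfolding m using den by (simp add: power_divide field_simps)
  also have "cnj e * (C * z - S * e)\<^sup>2 - e * (- S * cnj e * z + C)\<^sup>2 =
      (C * C - S * S) * (cnj e * z\<^sup>2 - e)"
    using cnj_mult_self_of_norm_1[OF assms(1)] by algebra
  also have "C * C - S * S = 1"
    by (simp add: C_def S_def cosh_sq_minus_sinh_sq_complex)
  finally show ?thesis
    by (simp add: C_def S_def)
qed

section \<open>Planimeter motions along a segment\<close>

definition no_slip_at :: "real \<Rightarrow> (real \<Rightarrow> complex) \<Rightarrow> (real \<Rightarrow> complex) \<Rightarrow> real \<Rightarrow> bool" where
  "no_slip_at l \<gamma> u t \<longleftrightarrow> (\<exists>g' u'.
     (\<gamma> has_vector_derivative g') (at t) \<and> (u has_vector_derivative u') (at t) \<and>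
     Im (cnj (u t) * (g' + complex_of_real l * u')) = 0)"

lemma prytz_motion_iff:
  "prytz_motion l \<gamma> u \<longleftrightarrow> continuous_on {0..1} u \<and> (\<forall>t\<in>{0..1}. norm (u t) = 1) \<and>
     (\<exists>S. finite S \<and> (\<forall>t\<in>{0<..<1} - S. no_slip_at l \<gamma> u t))"
  by (simp add: prytz_motion_def no_slip_at_def)

lemma unit_curve_derivative_orthogonal:
  assumes "open U" "t \<in> U" "\<forall>s\<in>U. norm (u s) = 1" "(u has_vector_derivative u') (at t)"
  shows "Re (cnj (u t) * u') = 0"
proof -
  have "((\<lambda>s. u s * cnj (u s)) has_vector_derivative u t * cnj u' + u' * cnj (u t)) (at t)"
    by (intro derivative_intros assms(4))
  moreover have "((\<lambda>s. u s * cnj (u s)) has_vector_derivative 0) (at t)"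
  proof (rule has_vector_derivative_transform_within_open[OF _ assms(1,2)])
    show "((\<lambda>s. 1) has_vector_derivative 0) (at t)"
      by simp
    show "1 = u s * cnj (u s)" if "s \<in> U" for s
      using assms(3) that complex_norm_square[of "u s"] by simp
  qed
  ultimately have "u t * cnj u' + u' * cnj (u t) = 0"
    by (rule vector_derivative_unique_at)
  then have "cnj (u t) * u' + cnj (cnj (u t) * u') = 0"
    by (simp add: algebra_simps)
  then have "complex_of_real (2 * Re (cnj (u t) * u')) = 0"
    by (simp only: complex_add_cnj)
  then show ?thesis
    by (simp only: of_real_eq_0_iff mult_eq_0_iff) simp
qed

lemma no_slip_iff_riccati:
  assumes "l > 0" "norm z = 1" "Re (cnj z * z') = 0"
  shows "Im (cnj z * (D + of_real l * z')) = 0 \<longleftrightarrow> z' = (cnj D * z\<^sup>2 - D) / of_real (2 * l)"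
proof -
  define X where "X = cnj z * z'"
  define Y where "Y = cnj z * D"
  have zz: "z * cnj z = 1"
    using assms(2) complex_norm_square[of z] by simp
  then have "z \<noteq> 0"
    by auto
  have "z * X = (z * cnj z) * z'"
    by (simp add: X_def mult.assoc)
  then have z': "z' = z * X"
    by (simp add: zz)
  have "Re X = 0"
    using assms(3) by (simp add: X_def)
  then have X: "X = \<i> * of_real (Im X)"
    by (simp add: complex_eq_iff)
  have "cnj Y = z * cnj D"
    by (simp add: Y_def mult.commute)
  then have "cnj D * z\<^sup>2 - D = z * (cnj Y - Y)"
    unfolding Y_def using zz by algebra
  also have "\<dots> = z * - (of_real (2 * Im Y) * \<i>)"
    by (simp only: complex_diff_cnj[symmetric] minus_diff_eq)
  finally have "(cnj D * z\<^sup>2 - D) / of_real (2 * l) =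
      z * - (of_real (2 * Im Y) * \<i>) / of_real (2 * l)"
    by simp
  also have "\<dots> = z * (\<i> * of_real (- Im Y / l))"
    using assms(1) by (simp add: field_simps)
  finally have riccati: "(cnj D * z\<^sup>2 - D) / of_real (2 * l) = z * (\<i> * of_real (- Im Y / l))" .
  have "z' = (cnj D * z\<^sup>2 - D) / of_real (2 * l) \<longleftrightarrow> X = \<i> * of_real (- Im Y / l)"
    unfolding riccati z' mult_cancel_left using \<open>z \<noteq> 0\<close> by blast
  also have "\<dots> \<longleftrightarrow> Im X = - Im Y / l"
    using X by (metis complex_i_not_zero mult_cancel_left of_real_eq_iff)
  also have "\<dots> \<longleftrightarrow> Im Y + l * Im X = 0"
    using assms(1) by (auto simp: field_simps)
  also have "Im Y + l * Im X = Im (cnj z * (D + of_real l * z'))"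
    by (simp add: X_def Y_def algebra_simps)
  finally show ?thesis ..
qed

lemma riccati_rhs_sgn:
  "of_real (norm D / (2 * l)) * (cnj (sgn D) * z - sgn D) = (cnj D * z - D) / of_real (2 * l)"
proof (cases "D = 0 \<or> l = 0")
  case False
  have sgn: "sgn D = D / of_real (norm D)" "cnj (sgn D) = cnj D / of_real (norm D)"
    by (simp_all add: complex_sgn_def scaleR_conv_of_real divide_inverse mult.commute)
  have "complex_of_real (norm D) \<noteq> 0" "complex_of_real l \<noteq> 0"
    using False by simp_all
  then show ?thesis
    unfolding sgn by (simp add: field_simps)
qed auto

lemma prytz_motion_linepath:
  assumes "l > 0" "q \<noteq> p" "norm z = 1"
  shows "prytz_motion l (linepath p q)
    (\<lambda>t. moebius (prytz_flow (sgn (q - p)) (norm (q - p) / (2 * l) * t)) z)"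
proof -
  define D where "D = q - p"
  define e where "e = sgn D"
  define k where "k = norm D / (2 * l)"
  define u where "u = (\<lambda>t. moebius (prytz_flow e (k * t)) z)"
  have e: "norm e = 1"
    using assms(2) by (simp add: e_def D_def norm_sgn)
  have norm_u: "norm (u t) = 1" for t
    using norm_SU11_moebius[OF prytz_flow_SU11[OF e] assms(3)] by (simp add: u_def)
  have riccati: "of_real k * (cnj e * (u t)\<^sup>2 - e) = (cnj D * (u t)\<^sup>2 - D) / of_real (2 * l)" for t
    unfolding k_def e_def by (rule riccati_rhs_sgn)
  have deriv_u: "(u has_vector_derivative of_real k * (cnj e * (u t)\<^sup>2 - e)) (at t)" for t
  proof -
    have "((\<lambda>t. moebius (prytz_flow e (k * t)) ((\<lambda>_. z) t)) has_vector_derivative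
        (0 + of_real k * (cnj e * z\<^sup>2 - e)) /
          (- of_real (sinh (k * t)) * cnj e * z + of_real (cosh (k * t)))\<^sup>2) (at t)"
      by (rule has_vector_derivative_moebius_prytz_flow) (use e assms(3) in auto)
    then show ?thesis
      using prytz_flow_riccati[OF e assms(3), of "k * t"] by (simp add: u_def)
  qed
  have "prytz_motion l (linepath p q) u"
    unfolding prytz_motion_iff
  proof (intro conjI ballI exI[of _ "{}"])
    show "continuous_on {0..1} u"
      using deriv_u by (metis continuous_at_imp_continuous_on has_vector_derivative_continuous)
    fix t :: real
    show "norm (u t) = 1"
      by (rule norm_u)
    assume "t \<in> {0<..<1} - {}"
    have "Re (cnj (u t) * (of_real k * (cnj e * (u t)\<^sup>2 - e))) = 0"
      using unit_curve_derivative_orthogonal[OF open_UNIV UNIV_I _ deriv_u] norm_u by simp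
    then have "Im (cnj (u t) * (D + of_real l * (of_real k * (cnj e * (u t)\<^sup>2 - e)))) = 0"
      using no_slip_iff_riccati[OF assms(1) norm_u] riccati by blast
    then show "no_slip_at l (linepath p q) u t"
      unfolding no_slip_at_def D_def
      using has_vector_derivative_linepath_within[of p q t UNIV] deriv_u by blast
  qed simp
  then show ?thesis
    by (simp add: u_def e_def k_def D_def)
qed

lemma vector_derivative_zero_imp_endpoints_eq:
  fixes f :: "real \<Rightarrow> 'a::banach"
  assumes "finite S" "continuous_on {0..1} f"
    "\<And>t. t \<in> {0<..<1} - S \<Longrightarrow> (f has_vector_derivative 0) (at t)"
  shows "f 1 = f 0"
proof (rule has_derivative_zero_unique_strong_interval[of "S \<union> {0, 1}" 0 1 f])
  fix t
  assume "t \<in> {0..1} - (S \<union> {0, 1})"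
  then have "(f has_vector_derivative 0) (at t)"
    by (intro assms(3)) auto
  then have "(f has_vector_derivative 0) (at t within {0..1})"
    by (rule has_vector_derivative_at_within)
  then show "(f has_derivative (\<lambda>h. 0)) (at t within {0..1})"
    by (simp add: has_vector_derivative_def)
qed (use assms(1,2) in auto)

lemma no_slip_linepath_riccati:
  assumes "l > 0" "no_slip_at l (linepath p q) u t" "open U" "t \<in> U" "\<forall>s\<in>U. norm (u s) = 1"
  shows "(u has_vector_derivative (cnj (q - p) * (u t)\<^sup>2 - (q - p)) / of_real (2 * l)) (at t)"
proof -
  obtain g' u' where g': "(linepath p q has_vector_derivative g') (at t)"
    and u': "(u has_vector_derivative u') (at t)"
    and slip: "Im (cnj (u t) * (g' + of_real l * u')) = 0"
    using assms(2) unfolding no_slip_at_def by blast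
  have "g' = q - p"
    using vector_derivative_unique_at[OF g' has_vector_derivative_linepath_within[of p q t UNIV]]
    by simp
  have "norm (u t) = 1"
    using assms(4,5) by blast
  moreover have "Re (cnj (u t) * u') = 0"
    by (rule unit_curve_derivative_orthogonal[OF assms(3,4,5) u'])
  ultimately have "u' = (cnj (q - p) * (u t)\<^sup>2 - (q - p)) / of_real (2 * l)"
    using no_slip_iff_riccati[OF assms(1)] slip \<open>g' = q - p\<close> by blast
  with u' show ?thesis
    by simp
qed

definition segment_holonomy :: "real \<Rightarrow> complex \<Rightarrow> complex^2^2" where
  "segment_holonomy l D = prytz_flow (sgn D) (norm D / (2 * l))"

lemma segment_holonomy_SU11: "segment_holonomy l D \<in> SU11"
proof (cases "D = 0")
  case False
  then show ?thesis
    unfolding segment_holonomy_def by (intro prytz_flow_SU11) (simp add: norm_sgn)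
qed (simp add: segment_holonomy_def prytz_flow_def SU11_mat2_iff)

lemma prytz_motion_linepath_endpoint:
  assumes "l > 0" "q \<noteq> p" "prytz_motion l (linepath p q) u"
  shows "u 1 = moebius (segment_holonomy l (q - p)) (u 0)"
proof -
  define D where "D = q - p"
  define e where "e = sgn D"
  define k where "k = norm D / (2 * l)"
  define Q where "Q = (\<lambda>t. moebius (prytz_flow e (- k * t)) (u t))"
  have e: "norm e = 1"
    using assms(2) by (simp add: e_def D_def norm_sgn)
  obtain S where "finite S" and no_slip: "\<forall>t\<in>{0<..<1} - S. no_slip_at l (linepath p q) u t"
    and cont: "continuous_on {0..1} u" and unit: "\<forall>t\<in>{0..1}. norm (u t) = 1"
    using assms(3) unfolding prytz_motion_iff by blast
  have Q': "(Q has_vector_derivative 0) (at t)" if t: "t \<in> {0<..<1} - S" for t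
  proof -
    have unit_t: "norm (u t) = 1"
      using unit t by auto
    have "(u has_vector_derivative (cnj D * (u t)\<^sup>2 - D) / of_real (2 * l)) (at t)"
      using no_slip_linepath_riccati[of l p q u t "{0<..<1}"] assms(1) no_slip unit t
      by (auto simp: D_def)
    then have "(u has_vector_derivative of_real k * (cnj e * (u t)\<^sup>2 - e)) (at t)"
      unfolding k_def e_def riccati_rhs_sgn .
    from has_vector_derivative_moebius_prytz_flow[OF e unit_t this, of "- k"] show ?thesis
      unfolding Q_def by simp
  qed
  have "continuous_on {0..1} Q"
    unfolding Q_def using e cont unit by (rule continuous_on_moebius_prytz_flow)
  with \<open>finite S\<close> have "Q 1 = Q 0"
    using Q' by (rule vector_derivative_zero_imp_endpoints_eq)
  have "u 1 = moebius (prytz_flow e k ** prytz_flow e (- k * 1)) (u 1)"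
    by (simp add: prytz_flow_add[OF e] moebius_prytz_flow_0)
  also have "\<dots> = moebius (prytz_flow e k) (Q 1)"
    unfolding Q_def using unit
    by (intro moebius_mult SU11_moebius_denominator_nonzero prytz_flow_SU11 e) auto
  also have "Q 1 = u 0"
    using \<open>Q 1 = Q 0\<close> by (simp add: Q_def moebius_prytz_flow_0)
  finally show ?thesis
    by (simp add: segment_holonomy_def e_def k_def D_def)
qed

lemma holonomy_linepath:
  assumes "l > 0" "q - p = D" "D \<noteq> 0"
  shows "holonomy_represented_by l (linepath p q) (segment_holonomy l D)"
  unfolding holonomy_represented_by_def assms(2)[symmetric]
proof (intro conjI allI impI)
  have "q \<noteq> p"
    using assms(2,3) by auto
  fix z :: complex
  assume "norm z = 1"
  let ?u = "\<lambda>t. moebius (prytz_flow (sgn (q - p)) (norm (q - p) / (2 * l) * t)) z"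
  have "prytz_motion l (linepath p q) ?u" "?u 0 = z"
    using prytz_motion_linepath[OF assms(1) \<open>q \<noteq> p\<close> \<open>norm z = 1\<close>]
    by (simp_all add: moebius_prytz_flow_0)
  then show "\<exists>u. prytz_motion l (linepath p q) u \<and> u 0 = z"
    by blast
qed (use prytz_motion_linepath_endpoint assms in auto)

section \<open>Concatenation of paths\<close>

lemma has_vector_derivative_affine_reparam:
  assumes "(f has_vector_derivative f') (at (a * t + b))" "open U" "t \<in> U"
    "\<And>s. s \<in> U \<Longrightarrow> g s = f (a * s + b)"
  shows "(g has_vector_derivative a *\<^sub>R f') (at t)"
proof -
  have "((\<lambda>s. a * s + b) has_vector_derivative a) (at t)"
    by (auto intro!: derivative_eq_intros)
  then have "(f \<circ> (\<lambda>s. a * s + b) has_vector_derivative a *\<^sub>R f') (at t)"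
    using assms(1) by (rule vector_diff_chain_at)
  then show ?thesis
    by (rule has_vector_derivative_transform_within_open[OF _ assms(2,3)]) (simp add: assms(4))
qed

lemma no_slip_at_affine_reparam:
  assumes "no_slip_at l \<gamma> u (a * t + b)" "open U" "t \<in> U"
    "\<And>s. s \<in> U \<Longrightarrow> \<delta> s = \<gamma> (a * s + b) \<and> v s = u (a * s + b)"
  shows "no_slip_at l \<delta> v t"
proof -
  obtain g' u' where g': "(\<gamma> has_vector_derivative g') (at (a * t + b))"
    and u': "(u has_vector_derivative u') (at (a * t + b))"
    and slip: "Im (cnj (u (a * t + b)) * (g' + of_real l * u')) = 0"
    using assms(1) unfolding no_slip_at_def by blast
  have "Im (cnj (v t) * (a *\<^sub>R g' + of_real l * a *\<^sub>R u')) =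
      a * Im (cnj (u (a * t + b)) * (g' + of_real l * u'))"
    using assms(3,4) by (simp add: scaleR_conv_of_real algebra_simps)
  with slip have "Im (cnj (v t) * (a *\<^sub>R g' + of_real l * a *\<^sub>R u')) = 0"
    by simp
  moreover have "(\<delta> has_vector_derivative a *\<^sub>R g') (at t)" "(v has_vector_derivative a *\<^sub>R u') (at t)"
    using assms(2-4)
    by (auto intro: has_vector_derivative_affine_reparam[OF g'] has_vector_derivative_affine_reparam[OF u'])
  ultimately show ?thesis
    unfolding no_slip_at_def by blast
qed

lemma prytz_motion_joinpaths:
  assumes "prytz_motion l \<gamma>1 u1" "prytz_motion l \<gamma>2 u2" "u1 1 = u2 0"
  shows "prytz_motion l (\<gamma>1 +++ \<gamma>2) (u1 +++ u2)"
proof -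
  obtain S1 where "finite S1" and no_slip1: "\<forall>t\<in>{0<..<1} - S1. no_slip_at l \<gamma>1 u1 t"
    and cont1: "continuous_on {0..1} u1" and unit1: "\<forall>t\<in>{0..1}. norm (u1 t) = 1"
    using assms(1) unfolding prytz_motion_iff by blast
  obtain S2 where "finite S2" and no_slip2: "\<forall>t\<in>{0<..<1} - S2. no_slip_at l \<gamma>2 u2 t"
    and cont2: "continuous_on {0..1} u2" and unit2: "\<forall>t\<in>{0..1}. norm (u2 t) = 1"
    using assms(2) unfolding prytz_motion_iff by blast
  define S where "S = (\<lambda>t. 2 * t) -` S1 \<union> (\<lambda>t. 2 * t - 1) -` S2 \<union> {1/2}"
  have "no_slip_at l (\<gamma>1 +++ \<gamma>2) (u1 +++ u2) t" if t: "t \<in> {0<..<1} - S" for t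
  proof (cases "t < 1/2")
    case True
    with t no_slip1 have "no_slip_at l \<gamma>1 u1 (2 * t + 0)"
      by (auto simp: S_def)
    then show ?thesis
      by (rule no_slip_at_affine_reparam[where U = "{..<1/2}"])
        (use True in \<open>auto simp: joinpaths_def\<close>)
  next
    case False
    with t have "t > 1/2"
      by (auto simp: S_def)
    with t no_slip2 have "no_slip_at l \<gamma>2 u2 (2 * t + - 1)"
      by (auto simp: S_def)
    then show ?thesis
      by (rule no_slip_at_affine_reparam[where U = "{1/2<..}"])
        (use \<open>t > 1/2\<close> in \<open>auto simp: joinpaths_def\<close>)
  qed
  moreover have "continuous_on {0..1} (u1 +++ u2)"
    using cont1 cont2 assms(3)
    by (intro continuous_on_joinpaths) (auto simp: pathfinish_def pathstart_def)
  moreover have "\<forall>t\<in>{0..1}. norm ((u1 +++ u2) t) = 1"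
    using unit1 unit2 by (auto simp: joinpaths_def)
  moreover have "finite S"
    using \<open>finite S1\<close> \<open>finite S2\<close> by (auto simp: S_def inj_on_def intro!: finite_vimageI)
  ultimately show ?thesis
    unfolding prytz_motion_iff by blast
qed

lemma prytz_motion_affine_reparam:
  assumes "prytz_motion l \<gamma> u" "0 < a" "0 \<le> b" "a + b \<le> 1"
    "\<And>t. t \<in> {0<..<1} \<Longrightarrow> \<delta> t = \<gamma> (a * t + b)"
  shows "prytz_motion l \<delta> (\<lambda>t. u (a * t + b))"
proof -
  obtain S where "finite S" and no_slip: "\<forall>t\<in>{0<..<1} - S. no_slip_at l \<gamma> u t"
    and cont: "continuous_on {0..1} u" and unit: "\<forall>t\<in>{0..1}. norm (u t) = 1"
    using assms(1) unfolding prytz_motion_iff by blast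
  have into: "a * t + b \<in> {0..1}" if "t \<in> {0..1}" for t
  proof -
    have "0 \<le> a * t" "a * t \<le> a"
      using that assms(2) by (auto intro: mult_left_le)
    then show ?thesis
      using assms(3,4) by simp
  qed
  have "no_slip_at l \<delta> (\<lambda>t. u (a * t + b)) t" if t: "t \<in> {0<..<1} - (\<lambda>t. a * t + b) -` S" for t
  proof (rule no_slip_at_affine_reparam[where U = "{0<..<1}"])
    have "0 < a * t" "a * t < a"
      using t assms(2) by auto
    then have "a * t + b \<in> {0<..<1}"
      using assms(3,4) by simp
    with t no_slip show "no_slip_at l \<gamma> u (a * t + b)"
      by blast
  qed (use t assms(5) in auto)
  moreover have "continuous_on {0..1} (\<lambda>t. u (a * t + b))"
    using into by (intro continuous_on_compose2[OF cont] continuous_intros) auto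
  moreover have "\<forall>t\<in>{0..1}. norm (u (a * t + b)) = 1"
    using unit into by blast
  moreover have "finite ((\<lambda>t. a * t + b) -` S)"
    using \<open>finite S\<close> assms(2) by (auto simp: inj_on_def intro!: finite_vimageI)
  ultimately show ?thesis
    unfolding prytz_motion_iff by blast
qed

lemma holonomy_joinpaths:
  assumes "holonomy_represented_by l \<gamma>1 M1" "holonomy_represented_by l \<gamma>2 M2" "M1 \<in> SU11"
  shows "holonomy_represented_by l (\<gamma>1 +++ \<gamma>2) (M2 ** M1)"
  unfolding holonomy_represented_by_def
proof (intro conjI allI impI)
  fix z :: complex
  assume "norm z = 1"
  then obtain u1 where u1: "prytz_motion l \<gamma>1 u1" "u1 0 = z"
    using assms(1) unfolding holonomy_represented_by_def by blast
  then have "norm (u1 1) = 1"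
    unfolding prytz_motion_def by auto
  then obtain u2 where u2: "prytz_motion l \<gamma>2 u2" "u2 0 = u1 1"
    using assms(2) unfolding holonomy_represented_by_def by blast
  have "prytz_motion l (\<gamma>1 +++ \<gamma>2) (u1 +++ u2)" "(u1 +++ u2) 0 = z"
    using prytz_motion_joinpaths[OF u1(1) u2(1)] u1(2) u2(2) by (simp_all add: joinpaths_def)
  then show "\<exists>u. prytz_motion l (\<gamma>1 +++ \<gamma>2) u \<and> u 0 = z"
    by blast
next
  fix u
  assume u: "prytz_motion l (\<gamma>1 +++ \<gamma>2) u"
  have "prytz_motion l \<gamma>1 (\<lambda>t. u (1/2 * t + 0))"
    by (rule prytz_motion_affine_reparam[OF u]) (auto simp: joinpaths_def)
  then have first: "u (1/2) = moebius M1 (u 0)"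
    using assms(1) unfolding holonomy_represented_by_def by fastforce
  have "prytz_motion l \<gamma>2 (\<lambda>t. u (1/2 * t + 1/2))"
    by (rule prytz_motion_affine_reparam[OF u]) (auto simp: joinpaths_def)
  then have second: "u 1 = moebius M2 (u (1/2))"
    using assms(2) unfolding holonomy_represented_by_def by fastforce
  have "norm (u 0) = 1"
    using u unfolding prytz_motion_def by auto
  then show "u 1 = moebius (M2 ** M1) (u 0)"
    using first second moebius_mult[OF SU11_moebius_denominator_nonzero[OF assms(3)]] by simp
qed

section \<open>The figure eight\<close>

lemma segment_holonomy_mat2:
  fixes l :: real and D :: complex
  defines "c \<equiv> complex_of_real (cosh (norm D / (2 * l)))"
    and "d \<equiv> - complex_of_real (sinh (norm D / (2 * l)) / norm D) * D"
  shows "segment_holonomy l D = mat2 c d (cnj d) c"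
proof -
  have "sgn D = of_real (1 / norm D) * D"
    by (simp add: complex_sgn_def scaleR_conv_of_real divide_inverse mult.commute)
  then have "- of_real (sinh (norm D / (2 * l))) * sgn D = d"
    "- of_real (sinh (norm D / (2 * l))) * cnj (sgn D) = cnj d"
    by (simp_all add: d_def)
  then show ?thesis
    by (simp add: segment_holonomy_def prytz_flow_def c_def)
qed

lemma segment_holonomy_double:
  assumes "D \<noteq> 0"
  shows "segment_holonomy l (2 * D) = segment_holonomy l D ** segment_holonomy l D"
proof -
  have "sgn (2 * D) = sgn ((2::real) *\<^sub>R D)"
    by (simp add: scaleR_conv_of_real)
  also have "\<dots> = sgn D"
    by (simp only: sgn_scaleR) simp
  moreover have "norm (2 * D) / (2 * l) = norm D / (2 * l) + norm D / (2 * l)"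
    by (simp add: norm_mult)
  ultimately show ?thesis
    unfolding segment_holonomy_def using assms by (simp only: prytz_flow_add norm_sgn if_False)
qed

lemma holonomy_figure_eight:
  assumes "l > 0" "v \<noteq> 0" "w \<noteq> 0"
  shows "holonomy_represented_by l (figure_eight v w)
    (segment_holonomy l v ** segment_holonomy l w ** segment_holonomy l (- v) **
     segment_holonomy l (- w) ** segment_holonomy l (- w) **
     segment_holonomy l (- v) ** segment_holonomy l w ** segment_holonomy l v)"
proof -
  have "- w - w = 2 * - w"
    by simp
  then have "segment_holonomy l (- w - w) = segment_holonomy l (- w) ** segment_holonomy l (- w)"
    using segment_holonomy_double[of "- w" l] assms(3) by simp
  moreover have "holonomy_represented_by l (figure_eight v w)
    (segment_holonomy l v ** segment_holonomy l w ** segment_holonomy l (- v) **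
     segment_holonomy l (- w - w) ** segment_holonomy l (- v) ** segment_holonomy l w **
     segment_holonomy l v)"
    unfolding figure_eight_def
    by (intro holonomy_joinpaths holonomy_linepath segment_holonomy_SU11) (use assms in simp_all)
  ultimately show ?thesis
    by (simp add: matrix_mul_assoc)
qed

text \<open>Given the determinant conditions, \<open>mat2 a (- b) (- b') a\<close> is the inverse of
  \<open>mat2 a b b' a\<close>, so this is the trace of A B A^-1 B^-2 A^-1 B A.\<close>

lemma trace_figure_eight_product:
  assumes "a * a - b * b' = 1" "c * c - d * d' = 1"
  shows "trace (mat2 a b b' a ** mat2 c d d' c ** mat2 a (- b) (- b') a ** mat2 c (- d) (- d') c **
      mat2 c (- d) (- d') c ** mat2 a (- b) (- b') a ** mat2 c d d' c ** mat2 a b b' a) =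
    2 - 4 * (b' * d - b * d')\<^sup>2 * ((a * d + b * c) * (a * d' + b' * c))"
  using assms unfolding mat2_mult trace_mat2 by algebra

lemma trace_holonomy_figure_eight:
  fixes v w :: complex and l :: real
  defines "a \<equiv> complex_of_real (cosh (norm v / (2 * l)))"
    and "b \<equiv> - complex_of_real (sinh (norm v / (2 * l)) / norm v) * v"
    and "c \<equiv> complex_of_real (cosh (norm w / (2 * l)))"
    and "d \<equiv> - complex_of_real (sinh (norm w / (2 * l)) / norm w) * w"
  shows "trace (segment_holonomy l v ** segment_holonomy l w ** segment_holonomy l (- v) **
      segment_holonomy l (- w) ** segment_holonomy l (- w) **
      segment_holonomy l (- v) ** segment_holonomy l w ** segment_holonomy l v) =
    of_real (2 + 16 * (Im (cnj b * d))\<^sup>2 * (norm (a * d + b * c))\<^sup>2)"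
proof -
  have A: "segment_holonomy l v = mat2 a b (cnj b) a"
    unfolding a_def b_def by (rule segment_holonomy_mat2)
  have A': "segment_holonomy l (- v) = mat2 a (- b) (- cnj b) a"
    using segment_holonomy_mat2[of l "- v"] by (simp add: a_def b_def)
  have B: "segment_holonomy l w = mat2 c d (cnj d) c"
    unfolding c_def d_def by (rule segment_holonomy_mat2)
  have B': "segment_holonomy l (- w) = mat2 c (- d) (- cnj d) c"
    using segment_holonomy_mat2[of l "- w"] by (simp add: c_def d_def)
  have "a * a - b * cnj b = 1" "c * c - d * cnj d = 1"
    using segment_holonomy_SU11[of l v] segment_holonomy_SU11[of l w]
    unfolding A B SU11_mat2_iff by simp_all
  then have "trace (segment_holonomy l v ** segment_holonomy l w ** segment_holonomy l (- v) **
      segment_holonomy l (- w) ** segment_holonomy l (- w) **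
      segment_holonomy l (- v) ** segment_holonomy l w ** segment_holonomy l v) =
    2 - 4 * (cnj b * d - b * cnj d)\<^sup>2 * ((a * d + b * c) * (a * cnj d + cnj b * c))"
    unfolding A A' B B' by (rule trace_figure_eight_product)
  also have "cnj b * d - b * cnj d = of_real (2 * Im (cnj b * d)) * \<i>"
    using complex_diff_cnj[of "cnj b * d"] by simp
  also have "a * cnj d + cnj b * c = cnj (a * d + b * c)"
    by (simp add: a_def c_def)
  also have "(a * d + b * c) * cnj (a * d + b * c) = of_real ((norm (a * d + b * c))\<^sup>2)"
    by (rule complex_norm_square[symmetric])
  also have "2 - 4 * (of_real (2 * x) * \<i>)\<^sup>2 * of_real (y\<^sup>2) = complex_of_real (2 + 16 * x\<^sup>2 * y\<^sup>2)"
    for x y :: real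
    by (simp add: power_mult_distrib algebra_simps)
  finally show ?thesis .
qed

lemma independent_Im_cnj_mult:
  fixes v w :: complex
  assumes "\<forall>s t :: real. s *\<^sub>R v + t *\<^sub>R w = 0 \<longrightarrow> s = 0 \<and> t = 0"
  shows "Im (cnj v * w) \<noteq> 0"
proof
  define s where "s = Re (cnj v * w)"
  assume "Im (cnj v * w) = 0"
  then have "cnj v * w = of_real s"
    by (simp add: s_def complex_eq_iff)
  have "of_real ((norm v)\<^sup>2) * w = v * (cnj v * w)"
    by (simp only: complex_norm_square mult.assoc)
  also have "\<dots> = of_real s * v"
    unfolding \<open>cnj v * w = of_real s\<close> by (rule mult.commute)
  finally have "s *\<^sub>R v + (- (norm v)\<^sup>2) *\<^sub>R w = 0"
    unfolding scaleR_conv_of_real of_real_minus by simp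
  from assms[rule_format, OF this] have "v = 0"
    by simp
  with assms[rule_format, of 1 0] show False
    by simp
qed

lemma figure_eight_trace_gt_2:
  fixes v w :: complex and l :: real
  assumes "l > 0" and indep: "\<forall>s t :: real. s *\<^sub>R v + t *\<^sub>R w = 0 \<longrightarrow> s = 0 \<and> t = 0"
  defines "a \<equiv> complex_of_real (cosh (norm v / (2 * l)))"
    and "b \<equiv> - complex_of_real (sinh (norm v / (2 * l)) / norm v) * v"
    and "c \<equiv> complex_of_real (cosh (norm w / (2 * l)))"
    and "d \<equiv> - complex_of_real (sinh (norm w / (2 * l)) / norm w) * w"
  shows "2 < 2 + 16 * (Im (cnj b * d))\<^sup>2 * (norm (a * d + b * c))\<^sup>2"
proof -
  define sv where "sv = sinh (norm v / (2 * l)) / norm v"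
  define sw where "sw = sinh (norm w / (2 * l)) / norm w"
  define cv where "cv = cosh (norm v / (2 * l))"
  define cw where "cw = cosh (norm w / (2 * l))"
  have "Im (cnj v * w) \<noteq> 0"
    using indep by (rule independent_Im_cnj_mult)
  then have "v \<noteq> 0" "w \<noteq> 0"
    by auto
  then have "0 < sv" "0 < sw" "0 < cw"
    using assms(1) by (simp_all add: sv_def sw_def cv_def cw_def)
  have a: "a = of_real cv" and b: "b = - of_real sv * v"
    and c: "c = of_real cw" and d: "d = - of_real sw * w"
    unfolding a_def b_def c_def d_def sv_def sw_def cv_def cw_def by (rule refl)+
  have "cnj b * d = of_real (sv * sw) * (cnj v * w)"
    unfolding b d by simp
  then have "Im (cnj b * d) \<noteq> 0"
    using \<open>Im (cnj v * w) \<noteq> 0\<close> \<open>0 < sv\<close> \<open>0 < sw\<close> by simp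
  moreover have "a * d + b * c \<noteq> 0"
  proof
    assume "a * d + b * c = 0"
    moreover have "a * d + b * c = - ((sv * cw) *\<^sub>R v + (cv * sw) *\<^sub>R w)"
      unfolding a b c d scaleR_conv_of_real of_real_mult by algebra
    ultimately have "(sv * cw) *\<^sub>R v + (cv * sw) *\<^sub>R w = 0"
      by (metis neg_equal_0_iff_equal)
    from indep[rule_format, OF this] have "sv * cw = 0"
      by simp
    with \<open>0 < sv\<close> \<open>0 < cw\<close> show False
      by simp
  qed
  ultimately show ?thesis
    by simp
qed

theorem mainTheorem8:
  fixes v w :: complex and l :: real
  assumes "l > 0"
    and "\<forall>s t :: real. s *\<^sub>R v + t *\<^sub>R w = 0 \<longrightarrow> s = 0 \<and> t = 0"
  shows "let a = complex_of_real (cosh (norm v / (2 * l)));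
             b = - complex_of_real (sinh (norm v / (2 * l)) / norm v) * v;
             c = complex_of_real (cosh (norm w / (2 * l)));
             d = - complex_of_real (sinh (norm w / (2 * l)) / norm w) * w;
             T = 2 + 16 * (Im (cnj b * d))\<^sup>2 * (norm (a * d + b * c))\<^sup>2
         in \<exists>M \<in> SU11. holonomy_represented_by l (figure_eight v w) M \<and>
              trace M = complex_of_real T \<and> T > 2 \<and>
              card {z. norm z = 1 \<and> moebius M z = z} = 2 \<and>
              (\<exists>z1 z2. norm z1 = 1 \<and> norm z2 = 1 \<and> moebius M z1 = z1 \<and> moebius M z2 = z2 \<and>
                 norm (deriv (moebius M) z1) < 1 \<and> norm (deriv (moebius M) z2) > 1)"
proof -
  have "v \<noteq> 0" "w \<noteq> 0"
    using independent_Im_cnj_mult[OF assms(2)] by auto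
  define H where "H = segment_holonomy l v ** segment_holonomy l w ** segment_holonomy l (- v) **
    segment_holonomy l (- w) ** segment_holonomy l (- w) **
    segment_holonomy l (- v) ** segment_holonomy l w ** segment_holonomy l v"
  have SU11: "H \<in> SU11"
    unfolding H_def by (intro SU11_mult segment_holonomy_SU11)
  have holonomy: "holonomy_represented_by l (figure_eight v w) H"
    unfolding H_def using assms(1) \<open>v \<noteq> 0\<close> \<open>w \<noteq> 0\<close> by (rule holonomy_figure_eight)
  note trace = trace_holonomy_figure_eight[where l = l and v = v and w = w, folded H_def]
  note trace_gt_2 = figure_eight_trace_gt_2[OF assms]
  have "2 < Re (trace H)"
    using trace trace_gt_2 by simp
  with SU11 have "card {z. norm z = 1 \<and> moebius H z = z} = 2 \<and>
      (\<exists>z1 z2. norm z1 = 1 \<and> norm z2 = 1 \<and> moebius H z1 = z1 \<and> moebius H z2 = z2 \<and>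
         norm (deriv (moebius H) z1) < 1 \<and> norm (deriv (moebius H) z2) > 1)"
    by (rule hyperbolic_SU11_dynamics)
  with SU11 holonomy trace trace_gt_2 show ?thesis
    unfolding Let_def by blast
qed

end
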